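(* Let $\phi(x,z)$ be an associate of the additive formal group, $V$ a nonlocal vertex algebra and $(W,Y_W)$ a $\phi$-coordinated quasi $V$-module. Let $u,v\in V$ and suppose $q(x_1,x_2)\in\mathbb{C}[[x_1,x_2]]$ satisfies $q(x_1,x_2)Y_W(u,x_1)Y_W(v,x_2)\in\mathrm{Hom}(W,W((x_1,x_2)))$. Then $$q(\phi(x_2,x_0),x_2)Y_W(Y(u,x_0)v,x_2)=\big(q(x_1,x_2)Y_W(u,x_1)Y_W(v,x_2)\big)|_{x_1=\phi(x_2,x_0)}.$$
   Context: An associate is $\phi(x,z)\in\mathbb{C}((x))[[z]]$ with $\phi(x,0)=x$ and $\phi(\phi(x,x_2),x_0)=\phi(x,x_0+x_2)$. Substitutions $x_1=\phi(x_2,x_0)$ into power series in $x_1,x_2$ or into elements of $\mathrm{Hom}(W,W((x_1,x_2)))$ give elements of $\mathbb{C}((x_2))[[x_0]]$ resp. $\mathrm{Hom}(W,W((x_2)))[[x_0]]$. A nonlocal vertex algebra: $(V,Y,\mathbf1)$ with $Y:V\to\mathrm{Hom}(V,V((x)))$, $Y(\mathbf1,x)=1$, $Y(v,x)\mathbf1\in V[[x]]$ with constant term $v$, and for $u,v,w$ some $l$ with $(x_0+x_2)^lY(u,x_0+x_2)Y(v,x_2)w=(x_0+x_2)^lY(Y(u,x_0)v,x_2)w$. A $\phi$-coordinated quasi $V$-module: $W$ with $Y_W:V\to\mathrm{Hom}(W,W((x)))$, $Y_W(\mathbf1,x)=1_W$, such that for $u,v\in V$ there exists $p(x,y)\in\mathbb{C}[[x,y]]$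 with $p(\phi(x,z),x)\ne0$, $p(x_1,x_2)Y_W(u,x_1)Y_W(v,x_2)\in\mathrm{Hom}(W,W((x_1,x_2)))$ and $p(\phi(x_2,x_0),x_2)Y_W(Y(u,x_0)v,x_2)=(p(x_1,x_2)Y_W(u,x_1)Y_W(v,x_2))|_{x_1=\phi(x_2,x_0)}$. *)

theory Defs
  imports "HOL-Computational_Algebra.Formal_Laurent_Series" "HOL-Library.Groups_Big_Fun"
begin

(* C((x))[[z]]   = complex fls fps   (an associate phi(x,z) lives here).
   A (vector-space valued) formal series is represented by its coefficient
   function; coefficients are indexed by the exponent (not by the mode index):
     Y u v n        = coefficient of x^n in Y(u,x)v,
     YW u w n       = coefficient of x^n in Y_W(u,x)w.
   Infinite formal sums whose coefficients are (provably) finite sums are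
   written with Sum_any (sum over the finite support). *)

(* phi(x,z)^m in C((x))[[z]] for an integer m (phi has invertible constant
   term x, so negative powers exist in C((x))[[z]]) *)
definition phi_pow :: "complex fls fps \<Rightarrow> int \<Rightarrow> complex fls fps" where
  "phi_pow \<phi> m = (if 0 \<le> m then \<phi> ^ nat m else inverse \<phi> ^ nat (- m))"

definition phi_coeff :: "complex fls fps \<Rightarrow> nat \<Rightarrow> int \<Rightarrow> int \<Rightarrow> complex" where
  "phi_coeff \<phi> k m j = fls_nth (fps_nth (phi_pow \<phi> m) k) j"

(* phi is an associate of the additive formal group:
   phi(x,0) = x  and  phi(phi(x,x2),x0) = phi(x,x0+x2).
   Coefficient of x0^i x2^j x^p on the left:  sum_m a_{i,m} [x2^j x^p] phi(x,x2)^m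
   (where phi(x,z) = sum_i a_i(x) z^i, a_i(x) = sum_m a_{i,m} x^m);
   on the right: binom(i+j,i) a_{i+j,p}. *)
definition is_associate :: "complex fls fps \<Rightarrow> bool" where
  "is_associate \<phi> \<longleftrightarrow>
     fps_nth \<phi> 0 = fls_X \<and>
     (\<forall>i j p. Sum_any (\<lambda>m. fls_nth (fps_nth \<phi> i) m * phi_coeff \<phi> j m p)
              = of_nat ((i + j) choose i) * fls_nth (fps_nth \<phi> (i + j)) p)"

(* f :: int => 'a lies in A((x)) (finitely many negative powers) *)
definition lower_trunc :: "(int \<Rightarrow> 'a::zero) \<Rightarrow> bool" where
  "lower_trunc f \<longleftrightarrow> (\<exists>N. \<forall>n<N. f n = 0)"

(* F :: int => int => 'a lies in A((x1,x2)) *)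
definition lower_trunc2 :: "(int \<Rightarrow> int \<Rightarrow> 'a::zero) \<Rightarrow> bool" where
  "lower_trunc2 F \<longleftrightarrow> (\<exists>N. \<forall>m n. m < N \<or> n < N \<longrightarrow> F m n = 0)"

definition nonlocal_va ::
  "(complex \<Rightarrow> 'v::ab_group_add \<Rightarrow> 'v) \<Rightarrow> ('v \<Rightarrow> 'v \<Rightarrow> int \<Rightarrow> 'v) \<Rightarrow> 'v \<Rightarrow> bool" where
  "nonlocal_va scV Y one \<longleftrightarrow>
     Vector_Spaces.vector_space scV \<and>
     (\<forall>v n. Vector_Spaces.linear scV scV (\<lambda>u. Y u v n)) \<and>
     (\<forall>u n. Vector_Spaces.linear scV scV (\<lambda>v. Y u v n)) \<and>
     (\<forall>u v. lower_trunc (Y u v)) \<and>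
     (\<forall>v n. Y one v n = (if n = 0 then v else 0)) \<and>
     (\<forall>v n. n < 0 \<longrightarrow> Y v one n = 0) \<and>
     (\<forall>v. Y v one 0 = v) \<and>
     (\<forall>u v w. \<exists>l::nat. \<forall>a b::int.
        \<comment> \<open>coefficient of x0^a x2^b in (x0+x2)^l Y(u,x0+x2)Y(v,x2)w\<close>
        Sum_any (\<lambda>i::nat. scV ((of_int (a + int i) :: complex) gchoose i)
                              (Y u (Y v w (b - int i)) (a + int i - int l)))
        \<comment> \<open>coefficient of x0^a x2^b in (x0+x2)^l Y(Y(u,x0)v,x2)w\<close>
      = (\<Sum>i\<le>l. scV (of_nat (l choose i)) (Y (Y u v (a - int (l - i))) w (b - int i))))"

(* coefficient of x1^m x2^n in q(x1,x2) Y_W(u,x1) Y_W(v,x2) w,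
   q i j = coefficient of x1^i x2^j in q \<in> C[[x1,x2]] *)
definition qYY ::
  "(complex \<Rightarrow> 'w::ab_group_add \<Rightarrow> 'w) \<Rightarrow> (nat \<Rightarrow> nat \<Rightarrow> complex) \<Rightarrow> ('v \<Rightarrow> 'w \<Rightarrow> int \<Rightarrow> 'w)
   \<Rightarrow> 'v \<Rightarrow> 'v \<Rightarrow> 'w \<Rightarrow> int \<Rightarrow> int \<Rightarrow> 'w" where
  "qYY scW q YW u v w m n =
     Sum_any (\<lambda>(i::nat, j::nat). scW (q i j) (YW u (YW v w (n - int j)) (m - int i)))"

(* coefficient of x0^k x2^p in q(phi(x2,x0),x2) \<in> C((x2))[[x0]] *)
definition q_subst :: "complex fls fps \<Rightarrow> (nat \<Rightarrow> nat \<Rightarrow> complex) \<Rightarrow> nat \<Rightarrow> int \<Rightarrow> complex" where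
  "q_subst \<phi> q k p = Sum_any (\<lambda>(i::nat, j::nat). q i j * phi_coeff \<phi> k (int i) (p - int j))"

(* coefficient of x0^k x2^p in F(x1,x2)|_{x1 = phi(x2,x0)} for F \<in> W((x1,x2)),
   F m n = coefficient of x1^m x2^n *)
definition subst_phi ::
  "(complex \<Rightarrow> 'w::ab_group_add \<Rightarrow> 'w) \<Rightarrow> complex fls fps \<Rightarrow> (int \<Rightarrow> int \<Rightarrow> 'w) \<Rightarrow> nat \<Rightarrow> int \<Rightarrow> 'w" where
  "subst_phi scW \<phi> F k p = Sum_any (\<lambda>(m::int, n::int). scW (phi_coeff \<phi> k m (p - n)) (F m n))"

(* coefficient of x0^a x2^b in q(phi(x2,x0),x2) Y_W(Y(u,x0)v,x2) w \<in> W((x2))((x0)) *)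
definition qYW_Y ::
  "(complex \<Rightarrow> 'w::ab_group_add \<Rightarrow> 'w) \<Rightarrow> complex fls fps \<Rightarrow> (nat \<Rightarrow> nat \<Rightarrow> complex)
   \<Rightarrow> ('v \<Rightarrow> 'v \<Rightarrow> int \<Rightarrow> 'v) \<Rightarrow> ('v \<Rightarrow> 'w \<Rightarrow> int \<Rightarrow> 'w) \<Rightarrow> 'v \<Rightarrow> 'v \<Rightarrow> 'w \<Rightarrow> int \<Rightarrow> int \<Rightarrow> 'w" where
  "qYW_Y scW \<phi> q Y YW u v w a b =
     Sum_any (\<lambda>(k::nat, p::int). scW (q_subst \<phi> q k p) (YW (Y u v (a - int k)) w (b - p)))"

(* the identity  q(phi(x2,x0),x2) Y_W(Y(u,x0)v,x2) = (q(x1,x2) Y_W(u,x1)Y_W(v,x2))|_{x1=phi(x2,x0)}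
   (as maps W -> W((x2))((x0)); the right side has no negative powers of x0) *)
definition assoc_identity ::
  "(complex \<Rightarrow> 'w::ab_group_add \<Rightarrow> 'w) \<Rightarrow> complex fls fps \<Rightarrow> (nat \<Rightarrow> nat \<Rightarrow> complex)
   \<Rightarrow> ('v \<Rightarrow> 'v \<Rightarrow> int \<Rightarrow> 'v) \<Rightarrow> ('v \<Rightarrow> 'w \<Rightarrow> int \<Rightarrow> 'w) \<Rightarrow> 'v \<Rightarrow> 'v \<Rightarrow> bool" where
  "assoc_identity scW \<phi> q Y YW u v \<longleftrightarrow>
     (\<forall>w a b. qYW_Y scW \<phi> q Y YW u v w a b
        = (if a < 0 then 0 else subst_phi scW \<phi> (qYY scW q YW u v w) (nat a) b))"

definition phi_quasi_module ::
  "complex fls fps \<Rightarrow> ('v \<Rightarrow> 'v \<Rightarrow> int \<Rightarrow> 'v) \<Rightarrow> 'v \<Rightarrow> (complex \<Rightarrow> 'v::ab_group_add \<Rightarrow> 'v)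
   \<Rightarrow> (complex \<Rightarrow> 'w::ab_group_add \<Rightarrow> 'w) \<Rightarrow> ('v \<Rightarrow> 'w \<Rightarrow> int \<Rightarrow> 'w) \<Rightarrow> bool" where
  "phi_quasi_module \<phi> Y one scV scW YW \<longleftrightarrow>
     Vector_Spaces.vector_space scW \<and>
     (\<forall>w n. Vector_Spaces.linear scV scW (\<lambda>u. YW u w n)) \<and>
     (\<forall>u n. Vector_Spaces.linear scW scW (\<lambda>w. YW u w n)) \<and>
     (\<forall>u w. lower_trunc (YW u w)) \<and>
     (\<forall>w n. YW one w n = (if n = 0 then w else 0)) \<and>
     (\<forall>u v. \<exists>p::nat \<Rightarrow> nat \<Rightarrow> complex.
        (\<exists>k j. q_subst \<phi> p k j \<noteq> 0) \<and>
        (\<forall>w. lower_trunc2 (qYY scW p YW u v w)) \<and>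
        assoc_identity scW \<phi> p Y YW u v)"

end

theory Submission
  imports Defs
begin

text \<open>Let \<open>p\<close> be the series provided by the module axiom for \<open>u, v\<close>. Substituting
  \<open>x\<^sub>1 = \<phi>(x\<^sub>2,x\<^sub>0)\<close> is multiplicative, \<open>(c F)|\<^bsub>x\<^sub>1=\<phi>\<^esub> = c(\<phi>,x\<^sub>2) F|\<^bsub>x\<^sub>1=\<phi>\<^esub>\<close> for
  \<open>c \<in> \<complex>[[x\<^sub>1,x\<^sub>2]]\<close>, because \<open>\<phi>^(m+i) = \<phi>^m \<phi>^i\<close>. With \<open>F = Y\<^sub>W(u,x\<^sub>1)Y\<^sub>W(v,x\<^sub>2)\<close> this gives
  \<open>p(\<phi>,x\<^sub>2) q(\<phi>,x\<^sub>2) Y\<^sub>W(Y(u,x\<^sub>0)v,x\<^sub>2) = q(\<phi>,x\<^sub>2) (pF)|\<^bsub>x\<^sub>1=\<phi>\<^esub> = (qpF)|\<^bsub>x\<^sub>1=\<phi>\<^esub>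
  = p(\<phi>,x\<^sub>2) (qF)|\<^bsub>x\<^sub>1=\<phi>\<^esub>\<close>, and the nonzero factor \<open>p(\<phi>(x\<^sub>2,x\<^sub>0),x\<^sub>2)\<close> can be cancelled:
  \<open>W((x\<^sub>2))((x\<^sub>0))\<close> has no torsion over \<open>\<complex>((x\<^sub>2))((x\<^sub>0))\<close>, as the product of the
  lexicographically lowest terms is the lowest term of a product.\<close>

unbundle fps_syntax

lemma Sum_any_nested:
  fixes g :: "'a \<Rightarrow> 'b \<Rightarrow> 'c::comm_monoid_add"
  assumes "finite {(a, b). g a b \<noteq> 0}"
  shows "Sum_any (\<lambda>a. Sum_any (g a)) = Sum_any (\<lambda>(a, b). g a b)"
proof (rule Sum_any.cartesian_product)
  let ?S = "{(a, b). g a b \<noteq> 0}"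
  show "finite (fst ` ?S \<times> snd ` ?S)"
    using assms by simp
  show "{a. \<exists>b. g a b \<noteq> 0} \<times> {b. \<exists>a. g a b \<noteq> 0} \<subseteq> fst ` ?S \<times> snd ` ?S"
  proof clarify
    fix a b a' b' assume "g a b' \<noteq> 0" "g a' b \<noteq> 0"
    then have "(a, b') \<in> ?S" "(a', b) \<in> ?S" by auto
    then show "a \<in> fst ` ?S \<and> b \<in> snd ` ?S" by (metis fst_conv snd_conv image_eqI)
  qed
qed

lemma Sum_any_nested3:
  fixes g :: "'a \<Rightarrow> 'b \<Rightarrow> 'c \<Rightarrow> 'd::comm_monoid_add"
  assumes fin: "finite {(a, b, c). g a b c \<noteq> 0}"
  shows "Sum_any (\<lambda>a. Sum_any (\<lambda>b. Sum_any (g a b))) = Sum_any (\<lambda>(a, b, c). g a b c)"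
proof -
  have "finite {(b, c). g a b c \<noteq> 0}" for a
    by (rule finite_subset[OF _ finite_imageI[OF fin, of snd]]) force
  then have "Sum_any (\<lambda>b. Sum_any (g a b)) = Sum_any (\<lambda>(b, c). g a b c)" for a
    by (rule Sum_any_nested)
  then have "Sum_any (\<lambda>a. Sum_any (\<lambda>b. Sum_any (g a b))) = Sum_any (\<lambda>a. Sum_any (\<lambda>(b, c). g a b c))"
    by simp
  also have "\<dots> = Sum_any (\<lambda>(a, b, c). g a b c)"
    by (rule Sum_any_nested) (rule finite_subset[OF _ fin], auto)
  finally show ?thesis .
qed

lemma Sum_any_reindex_inj:
  assumes "inj l" and "\<And>x. x \<notin> range l \<Longrightarrow> g x = 0" and "\<And>y. h y = g (l y)"
  shows "Sum_any h = Sum_any g"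
proof -
  have supp: "{x. g x \<noteq> 0} = l ` {y. h y \<noteq> 0}"
    using assms(2,3) by (auto simp: image_iff) (metis rangeE)
  have inj: "inj_on l {y. h y \<noteq> 0}"
    using assms(1) by (rule inj_on_subset) simp
  show ?thesis
  proof (cases "finite {y. h y \<noteq> 0}")
    case True
    have "sum g {x. g x \<noteq> 0} = sum h {y. h y \<noteq> 0}"
      by (rule sum.reindex_cong[OF inj supp]) (simp add: assms(3))
    with True show ?thesis
      by (simp add: Sum_any.expand_set)
  next
    case False
    then show ?thesis
      using finite_image_iff[OF inj] by (simp add: supp)
  qed
qed

lemma Sum_any_diff:
  fixes f g :: "'a \<Rightarrow> 'b::ab_group_add"
  assumes "finite {x. f x \<noteq> 0}" and "finite {x. g x \<noteq> 0}"
  shows "Sum_any (\<lambda>x. f x - g x) = Sum_any f - Sum_any g"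
  using Sum_any.distrib[OF assms(1), of "\<lambda>x. - g x"] assms(2)
  by (simp add: Sum_any.expand_set sum_negf)

context vector_space
begin

text \<open>Both sides vanish when the support is infinite, so no finiteness hypothesis is needed.\<close>

lemma scale_Sum_any_right: "scale c (Sum_any f) = Sum_any (\<lambda>x. scale c (f x))"
proof (cases "c = 0")
  case False
  then have "{x. scale c (f x) \<noteq> 0} = {x. f x \<noteq> 0}"
    by simp
  then show ?thesis
    by (simp add: Sum_any.expand_set scale_sum_right)
qed simp

lemma scale_Sum_any_left: "scale (Sum_any f) v = Sum_any (\<lambda>x. scale (f x) v)"
proof (cases "v = 0")
  case False
  then have "{x. scale (f x) v \<noteq> 0} = {x. f x \<noteq> 0}"
    by simp
  then show ?thesis
    by (simp add: Sum_any.expand_set scale_sum_left)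
qed simp

end

lemma phi_pow_add_one:
  fixes \<phi> :: "complex fls fps"
  assumes "\<phi> $ 0 \<noteq> 0"
  shows "phi_pow \<phi> (n + 1) = phi_pow \<phi> n * \<phi>"
proof (cases "0 \<le> n")
  case True
  then have "nat (n + 1) = Suc (nat n)"
    by simp
  with True show ?thesis
    by (simp add: phi_pow_def mult.commute)
next
  case False
  have inv: "inverse \<phi> * \<phi> = 1"
    using assms by (rule inverse_mult_eq_1)
  obtain k where k: "nat (- n) = Suc k"
    using False by (cases "nat (- n)") auto
  show ?thesis
  proof (cases "n = -1")
    case False': False
    then have "nat (- (n + 1)) = k"
      using k by simp
    with False False' k inv show ?thesis
      by (simp add: phi_pow_def mult.assoc)
  qed (simp add: phi_pow_def inv)
qed

lemma phi_pow_add_nat: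
  fixes \<phi> :: "complex fls fps"
  assumes "\<phi> $ 0 \<noteq> 0"
  shows "phi_pow \<phi> (m + int i) = phi_pow \<phi> m * \<phi> ^ i"
proof (induction i)
  case (Suc i)
  have "phi_pow \<phi> (m + int (Suc i)) = phi_pow \<phi> (m + int i) * \<phi>"
    using phi_pow_add_one[OF assms, of "m + int i"] by (simp add: ac_simps)
  with Suc show ?case
    by (simp add: mult_ac)
qed simp

lemma fls_times_nth_Sum_any:
  fixes f g :: "'a::comm_semiring_0 fls"
  shows "(f * g) $$ t = Sum_any (\<lambda>s. f $$ s * g $$ (t - s))"
proof -
  have "{s. f $$ s * g $$ (t - s) \<noteq> 0} \<subseteq> {fls_subdegree f..t - fls_subdegree g}"
    by (auto simp: not_less[symmetric] fls_eq0_below_subdegree)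
  then have "Sum_any (\<lambda>s. f $$ s * g $$ (t - s))
      = (\<Sum>s=fls_subdegree f..t - fls_subdegree g. f $$ s * g $$ (t - s))"
    by (rule Sum_any.expand_superset[OF finite_atLeastAtMost_int])
  then show ?thesis
    by (simp add: fls_times_nth(2))
qed

lemma fps_fls_times_nth_eq_0:
  fixes A B :: "'a::comm_semiring_0 fls fps"
  assumes "\<And>r j. r \<le> k \<Longrightarrow> j < \<alpha> r \<Longrightarrow> A $ r $$ j = 0"
    and "\<And>r j. r \<le> k \<Longrightarrow> j < \<beta> r \<Longrightarrow> B $ (k - r) $$ j = 0"
    and "\<And>r. r \<le> k \<Longrightarrow> t < \<alpha> r + \<beta> r"
  shows "(A * B) $ k $$ t = 0"
proof -
  have "A $ r $$ s * B $ (k - r) $$ (t - s) = 0" if "r \<le> k" for r s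
    using assms[OF that] by (cases "s < \<alpha> r") force+
  then show ?thesis
    by (simp add: fps_mult_nth fls_nth_sum fls_times_nth_Sum_any)
qed

lemma fls_uniform_lower_bound:
  fixes f :: "nat \<Rightarrow> 'a::zero fls"
  shows "\<exists>L. \<forall>r\<le>K. \<forall>j<L. f r $$ j = 0"
proof -
  define L where "L = Min ((\<lambda>r. fls_subdegree (f r)) ` {..K})"
  have "\<forall>r\<le>K. L \<le> fls_subdegree (f r)"
    unfolding L_def by (auto intro: Min_le)
  then show ?thesis
    by (intro exI[of _ L]) (auto intro: fls_eq0_below_subdegree)
qed

text \<open>The constant term \<open>x\<close> of \<open>\<phi>\<close> raises the \<open>x\<close>-degree of \<open>\<phi>^i\<close> by \<open>i\<close>, while each
  power of \<open>z\<close> costs at most a fixed amount \<open>D\<close>.\<close>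

lemma fps_power_nth_eq_0_below:
  fixes \<phi> :: "'a::comm_semiring_1 fls fps"
  assumes "\<phi> $ 0 = fls_X"
  shows "\<exists>D\<ge>0. \<forall>i k j. k \<le> K \<longrightarrow> j < int i - int k * D \<longrightarrow> (\<phi> ^ i) $ k $$ j = 0"
proof -
  obtain L where L: "\<forall>r\<le>K. \<forall>j<L. \<phi> $ r $$ j = 0"
    using fls_uniform_lower_bound by blast
  define D where "D = max 0 (1 - L)"
  have D0: "D \<ge> 0"
    unfolding D_def by simp
  have "\<forall>k j. k \<le> K \<longrightarrow> j < int i - int k * D \<longrightarrow> (\<phi> ^ i) $ k $$ j = 0" for i
  proof (induction i)
    case (Suc i)
    show ?case
    proof (intro allI impI)
      fix k j
      assume k: "k \<le> K" and j: "j < int (Suc i) - int k * D"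
      have "(\<phi> * \<phi> ^ i) $ k $$ j = 0"
      proof (rule fps_fls_times_nth_eq_0[where \<alpha> = "\<lambda>r. if r = 0 then 1 else 1 - D"
            and \<beta> = "\<lambda>r. int i - int (k - r) * D"])
        fix r j'
        assume "r \<le> k" and "j' < (if r = 0 then 1 else 1 - D)"
        then show "\<phi> $ r $$ j' = 0"
          using assms L k D_def by (cases "r = 0") auto
      next
        fix r j'
        assume "r \<le> k" and "j' < int i - int (k - r) * D"
        then show "(\<phi> ^ i) $ (k - r) $$ j' = 0"
          using Suc k by auto
      next
        fix r
        assume r: "r \<le> k"
        have "r \<noteq> 0 \<Longrightarrow> int (k - r) * D \<le> (int k - 1) * D"
          using r D0 by (intro mult_right_mono) auto
        then show "j < (if r = 0 then 1 else 1 - D) + (int i - int (k - r) * D)"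
          using j by (cases "r = 0") (auto simp: algebra_simps)
      qed
      then show "(\<phi> ^ Suc i) $ k $$ j = 0"
        by simp
    qed
  qed (use D0 in \<open>auto simp: mult_nonneg_nonneg\<close>)
  with D0 show ?thesis
    by blast
qed

lemma phi_coeff_lower_bound:
  fixes \<phi> :: "complex fls fps"
  assumes "\<phi> $ 0 = fls_X"
  obtains E where "\<And>k m j. phi_coeff \<phi> k m j \<noteq> 0 \<Longrightarrow> k \<le> K \<Longrightarrow> N \<le> m \<Longrightarrow> m - E \<le> j"
proof -
  obtain D where D0: "D \<ge> 0"
    and D: "\<forall>i k j. k \<le> K \<longrightarrow> j < int i - int k * D \<longrightarrow> (\<phi> ^ i) $ k $$ j = 0"
    using fps_power_nth_eq_0_below[OF assms] by blast
  obtain L where L: "\<forall>r\<le>K. \<forall>j<L. phi_pow \<phi> N $ r $$ j = 0"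
    using fls_uniform_lower_bound by blast
  have ne: "\<phi> $ 0 \<noteq> 0"
    using assms by simp
  have "phi_coeff \<phi> k m j = 0"
    if k: "k \<le> K" and m: "N \<le> m" and j: "j < m - (N - L + int K * D)" for k m j
  proof -
    define i where "i = nat (m - N)"
    have m_eq: "m = N + int i"
      using m i_def by simp
    have "(phi_pow \<phi> N * \<phi> ^ i) $ k $$ j = 0"
    proof (rule fps_fls_times_nth_eq_0[where \<alpha> = "\<lambda>r. L" and \<beta> = "\<lambda>r. int i - int (k - r) * D"])
      fix r
      assume "r \<le> k"
      then have "int (k - r) * D \<le> int K * D"
        using k D0 by (intro mult_right_mono) auto
      then show "j < L + (int i - int (k - r) * D)"
        using j m_eq by simp
    qed (use L D k in auto)
    then show ?thesis
      unfolding phi_coeff_def m_eq phi_pow_add_nat[OF ne] .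
  qed
  then show ?thesis
    using that by (meson not_le)
qed

lemma phi_coeff_add:
  fixes \<phi> :: "complex fls fps"
  assumes "\<phi> $ 0 \<noteq> 0"
  shows "phi_coeff \<phi> k m t = Sum_any (\<lambda>(k1::int, s::int). if 0 \<le> k1 \<and> k1 \<le> int k
    then phi_coeff \<phi> (nat k1) (int i) s * phi_coeff \<phi> (k - nat k1) (m - int i) (t - s) else 0)"
proof -
  define g where
    "g r s = (if r \<le> k then (\<phi> ^ i) $ r $$ s * phi_pow \<phi> (m - int i) $ (k - r) $$ (t - s) else 0)"
    for r s
  obtain L1 where L1: "\<forall>r\<le>k. \<forall>j<L1. (\<phi> ^ i) $ r $$ j = 0"
    using fls_uniform_lower_bound by blast
  obtain L2 where L2: "\<forall>r\<le>k. \<forall>j<L2. phi_pow \<phi> (m - int i) $ r $$ j = 0"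
    using fls_uniform_lower_bound by blast
  have "{(r, s). g r s \<noteq> 0} \<subseteq> {..k} \<times> {L1..t - L2}"
    using L1 L2 by (auto simp: g_def not_less[symmetric])
  then have fin: "finite {(r, s). g r s \<noteq> 0}"
    by (rule finite_subset) simp
  have "phi_coeff \<phi> k m t = (\<phi> ^ i * phi_pow \<phi> (m - int i)) $ k $$ t"
    using phi_pow_add_nat[OF assms, of "m - int i" i] by (simp add: phi_coeff_def mult.commute)
  also have "\<dots> = (\<Sum>r\<in>{..k}. Sum_any (g r))"
    by (simp add: fps_mult_nth fls_nth_sum fls_times_nth_Sum_any g_def atLeast0AtMost)
  also have "\<dots> = Sum_any (\<lambda>r. Sum_any (g r))"
  proof (rule Sum_any.expand_superset[symmetric])
    have "Sum_any (g r) = 0" if "\<not> r \<le> k" for r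
      using that by (simp add: g_def)
    then show "{r. Sum_any (g r) \<noteq> 0} \<subseteq> {..k}"
      by force
  qed simp
  also have "\<dots> = Sum_any (\<lambda>(r, s). g r s)"
    by (rule Sum_any_nested[OF fin])
  also have "\<dots> = Sum_any (\<lambda>(k1::int, s::int). if 0 \<le> k1 then g (nat k1) s else 0)"
  proof (rule Sum_any_reindex_inj[of "\<lambda>(r, s). (int r, s)"])
    show "inj (\<lambda>(r::nat, s::int). (int r, s))"
      by (auto simp: inj_def)
  qed (auto simp: image_iff, metis nonneg_int_cases)
  finally show ?thesis
    unfolding g_def phi_coeff_def by (auto intro: Sum_any.cong simp: phi_pow_def)
qed

text \<open>A function \<open>f :: int \<Rightarrow> int \<Rightarrow> 'a\<close> with \<open>lex_trunc f\<close> is the coefficient function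
  \<open>f a b = [x\<^sub>0^a x\<^sub>2^b]\<close> of an element of \<open>A((x\<^sub>2))((x\<^sub>0))\<close>; \<open>conv2\<close> is the action of
  scalar series of this kind on vector-valued ones.\<close>

definition lex_trunc :: "(int \<Rightarrow> int \<Rightarrow> 'a::zero) \<Rightarrow> bool" where
  "lex_trunc f \<longleftrightarrow> (\<exists>N. \<forall>a b. a < N \<longrightarrow> f a b = 0) \<and> (\<forall>a. \<exists>M. \<forall>b. b < M \<longrightarrow> f a b = 0)"

definition conv2 ::
  "('a \<Rightarrow> 'w \<Rightarrow> 'w) \<Rightarrow> (int \<Rightarrow> int \<Rightarrow> 'a) \<Rightarrow> (int \<Rightarrow> int \<Rightarrow> 'w::ab_group_add) \<Rightarrow> int \<Rightarrow> int \<Rightarrow> 'w"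
where
  "conv2 scale c f a b = Sum_any (\<lambda>(k, p). scale (c k p) (f (a - k) (b - p)))"

lemma lex_trunc_lower_bound:
  assumes "lex_trunc f"
  obtains N where "\<And>a b. f a b \<noteq> 0 \<Longrightarrow> N \<le> a"
proof -
  from assms obtain N where "\<forall>a b. a < N \<longrightarrow> f a b = 0"
    unfolding lex_trunc_def by blast
  then show ?thesis
    using that by (meson not_le)
qed

lemma lex_trunc_uniform_lower_bound:
  assumes "lex_trunc f"
  obtains M where "\<And>a b. f a b \<noteq> 0 \<Longrightarrow> lo \<le> a \<Longrightarrow> a \<le> hi \<Longrightarrow> M \<le> b"
proof -
  obtain Mf where Mf: "\<And>a b. b < Mf a \<Longrightarrow> f a b = 0"
    using assms unfolding lex_trunc_def by metis
  define M where "M = Min (Mf ` {lo..hi})"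
  have "M \<le> Mf a" if "lo \<le> a" "a \<le> hi" for a
    using that unfolding M_def by (intro Min_le) auto
  then have "M \<le> b" if "f a b \<noteq> 0" "lo \<le> a" "a \<le> hi" for a b
    using Mf[of b a] that by fastforce
  then show ?thesis
    by (rule that)
qed

lemma lex_trunc_diff:
  fixes f g :: "int \<Rightarrow> int \<Rightarrow> 'a::ab_group_add"
  assumes "lex_trunc f" and "lex_trunc g"
  shows "lex_trunc (\<lambda>a b. f a b - g a b)"
proof -
  obtain N1 N2 where "\<forall>a b. a < N1 \<longrightarrow> f a b = 0" and "\<forall>a b. a < N2 \<longrightarrow> g a b = 0"
    using assms unfolding lex_trunc_def by blast
  moreover have "\<exists>M. \<forall>b. b < M \<longrightarrow> f a b - g a b = 0" for a
  proof -
    obtain M1 M2 where "\<forall>b. b < M1 \<longrightarrow> f a b = 0" and "\<forall>b. b < M2 \<longrightarrow> g a b = 0"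
      using assms unfolding lex_trunc_def by blast
    then show ?thesis
      by (intro exI[of _ "min M1 M2"]) auto
  qed
  ultimately show ?thesis
    unfolding lex_trunc_def by (intro conjI exI[of _ "min N1 N2"]) auto
qed

lemma int_least_element:
  fixes P :: "int \<Rightarrow> bool"
  assumes "P x" and "\<And>x. P x \<Longrightarrow> N \<le> x"
  obtains m where "P m" and "\<And>x. P x \<Longrightarrow> m \<le> x"
proof -
  obtain m where m: "P m" and least: "\<forall>y. P y \<longrightarrow> nat (m - N) \<le> nat (y - N)"
    using ex_has_least_nat[of P x "\<lambda>y. nat (y - N)"] assms(1) by blast
  have "m \<le> y" if "P y" for y
    using least[rule_format, OF that] assms(2)[OF that] by (simp add: nat_le_eq_zle)
  with m show ?thesis
    by (rule that)
qed

lemma lex_trunc_least_nonzero: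
  assumes "lex_trunc f" and "f a b \<noteq> 0"
  obtains a0 b0 where "f a0 b0 \<noteq> 0" and "\<And>a b. f a b \<noteq> 0 \<Longrightarrow> a0 < a \<or> a = a0 \<and> b0 \<le> b"
proof -
  obtain N where N: "\<And>a b. f a b \<noteq> 0 \<Longrightarrow> N \<le> a"
    using assms(1) by (rule lex_trunc_lower_bound) blast
  obtain a0 where a0: "\<exists>b. f a0 b \<noteq> 0" and a0_least: "\<And>a. \<exists>b. f a b \<noteq> 0 \<Longrightarrow> a0 \<le> a"
    by (rule int_least_element[of "\<lambda>a. \<exists>b. f a b \<noteq> 0" a N]) (use assms(2) N in auto)
  obtain M where M: "\<And>b. f a0 b \<noteq> 0 \<Longrightarrow> M \<le> b"
    using lex_trunc_uniform_lower_bound[OF assms(1), of a0 a0] by (metis order_refl)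
  obtain b1 where "f a0 b1 \<noteq> 0"
    using a0 by blast
  then obtain b0 where b0: "f a0 b0 \<noteq> 0" and b0_least: "\<And>b. f a0 b \<noteq> 0 \<Longrightarrow> b0 \<le> b"
    by (rule int_least_element[of "\<lambda>b. f a0 b \<noteq> 0" b1 M]) (use M in auto)
  have "a0 < a \<or> a = a0 \<and> b0 \<le> b" if "f a b \<noteq> 0" for a b
    using a0_least[of a] b0_least[of b] that by (cases "a = a0") force+
  with b0 show ?thesis
    by (rule that)
qed

lemma finite_conv2_support:
  fixes c :: "int \<Rightarrow> int \<Rightarrow> 'a::zero" and f :: "int \<Rightarrow> int \<Rightarrow> 'b::zero"
  assumes "lex_trunc c" and "lex_trunc f"
  shows "finite {(k, p). c k p \<noteq> 0 \<and> f (a - k) (b - p) \<noteq> 0}"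
proof -
  obtain Nc Nf where Nc: "\<And>a b. c a b \<noteq> 0 \<Longrightarrow> Nc \<le> a" and Nf: "\<And>a b. f a b \<noteq> 0 \<Longrightarrow> Nf \<le> a"
    using assms lex_trunc_lower_bound by metis
  obtain Mc where Mc: "\<And>k p. c k p \<noteq> 0 \<Longrightarrow> Nc \<le> k \<Longrightarrow> k \<le> a - Nf \<Longrightarrow> Mc \<le> p"
    using assms(1) by (rule lex_trunc_uniform_lower_bound) blast
  obtain Mf where Mf: "\<And>k p. f k p \<noteq> 0 \<Longrightarrow> Nf \<le> k \<Longrightarrow> k \<le> a - Nc \<Longrightarrow> Mf \<le> p"
    using assms(2) by (rule lex_trunc_uniform_lower_bound) blast
  have "{(k, p). c k p \<noteq> 0 \<and> f (a - k) (b - p) \<noteq> 0} \<subseteq> {Nc..a - Nf} \<times> {Mc..b - Mf}"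
  proof (rule subsetI)
    fix x
    assume "x \<in> {(k, p). c k p \<noteq> 0 \<and> f (a - k) (b - p) \<noteq> 0}"
    then obtain k p where x: "x = (k, p)" and nz: "c k p \<noteq> 0" "f (a - k) (b - p) \<noteq> 0"
      by blast
    have k: "Nc \<le> k" "Nf \<le> a - k"
      using Nc[OF nz(1)] Nf[OF nz(2)] .
    then have "Mc \<le> p" "Mf \<le> b - p"
      using Mc[OF nz(1)] Mf[OF nz(2)] by simp_all
    with k x show "x \<in> {Nc..a - Nf} \<times> {Mc..b - Mf}"
      by simp
  qed
  then show ?thesis
    by (rule finite_subset) simp
qed

lemma finite_conv2_conv2_support:
  fixes c1 c2 :: "int \<Rightarrow> int \<Rightarrow> 'a::zero" and f :: "int \<Rightarrow> int \<Rightarrow> 'b::zero"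
  assumes "lex_trunc c1" and "lex_trunc c2" and "lex_trunc f"
  shows "finite {((k1, p1), (k2, p2)). c1 k1 p1 \<noteq> 0 \<and> c2 k2 p2 \<noteq> 0 \<and> f (a - k1 - k2) (b - p1 - p2) \<noteq> 0}"
proof -
  obtain N1 N2 Nf where N1: "\<And>a b. c1 a b \<noteq> 0 \<Longrightarrow> N1 \<le> a"
    and N2: "\<And>a b. c2 a b \<noteq> 0 \<Longrightarrow> N2 \<le> a" and Nf: "\<And>a b. f a b \<noteq> 0 \<Longrightarrow> Nf \<le> a"
    using assms lex_trunc_lower_bound by metis
  obtain M1 where M1: "\<And>k p. c1 k p \<noteq> 0 \<Longrightarrow> N1 \<le> k \<Longrightarrow> k \<le> a - N2 - Nf \<Longrightarrow> M1 \<le> p"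
    using assms(1) by (rule lex_trunc_uniform_lower_bound) blast
  obtain M2 where M2: "\<And>k p. c2 k p \<noteq> 0 \<Longrightarrow> N2 \<le> k \<Longrightarrow> k \<le> a - N1 - Nf \<Longrightarrow> M2 \<le> p"
    using assms(2) by (rule lex_trunc_uniform_lower_bound) blast
  obtain Mf where Mf: "\<And>k p. f k p \<noteq> 0 \<Longrightarrow> Nf \<le> k \<Longrightarrow> k \<le> a - N1 - N2 \<Longrightarrow> Mf \<le> p"
    using assms(3) by (rule lex_trunc_uniform_lower_bound) blast
  let ?box = "({N1..a - N2 - Nf} \<times> {M1..b - M2 - Mf}) \<times> ({N2..a - N1 - Nf} \<times> {M2..b - M1 - Mf})"
  have "{((k1, p1), (k2, p2)). c1 k1 p1 \<noteq> 0 \<and> c2 k2 p2 \<noteq> 0 \<and> f (a - k1 - k2) (b - p1 - p2) \<noteq> 0}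
    \<subseteq> ?box"
  proof (rule subsetI)
    fix x
    assume "x \<in> {((k1, p1), (k2, p2)). c1 k1 p1 \<noteq> 0 \<and> c2 k2 p2 \<noteq> 0 \<and> f (a - k1 - k2) (b - p1 - p2) \<noteq> 0}"
    then obtain k1 p1 k2 p2 where x: "x = ((k1, p1), (k2, p2))"
      and nz: "c1 k1 p1 \<noteq> 0" "c2 k2 p2 \<noteq> 0" "f (a - k1 - k2) (b - p1 - p2) \<noteq> 0"
      by blast
    have k: "N1 \<le> k1" "N2 \<le> k2" "Nf \<le> a - k1 - k2"
      using N1[OF nz(1)] N2[OF nz(2)] Nf[OF nz(3)] .
    then have "M1 \<le> p1" "M2 \<le> p2" "Mf \<le> b - p1 - p2"
      using M1[OF nz(1)] M2[OF nz(2)] Mf[OF nz(3)] by simp_all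
    with k x show "x \<in> ?box"
      by simp
  qed
  then show ?thesis
    by (rule finite_subset) simp
qed

context vector_space
begin

lemma conv2_nonzero_obtains:
  assumes "conv2 scale c f a b \<noteq> 0"
  obtains k p where "c k p \<noteq> 0" and "f (a - k) (b - p) \<noteq> 0"
proof -
  from assms obtain x where "(\<lambda>(k, p). scale (c k p) (f (a - k) (b - p))) x \<noteq> 0"
    unfolding conv2_def by (rule Sum_any.not_neutral_obtains_not_neutral)
  with that show ?thesis
    by (cases x) auto
qed

lemma lex_trunc_conv2:
  assumes "lex_trunc c" and "lex_trunc f"
  shows "lex_trunc (conv2 scale c f)"
proof -
  obtain Nc Nf where Nc: "\<And>a b. c a b \<noteq> 0 \<Longrightarrow> Nc \<le> a" and Nf: "\<And>a b. f a b \<noteq> 0 \<Longrightarrow> Nf \<le> a"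
    using assms lex_trunc_lower_bound by metis
  have "Nc + Nf \<le> a" if "conv2 scale c f a b \<noteq> 0" for a b
    using that by (elim conv2_nonzero_obtains) (use Nc Nf in fastforce)
  moreover have "\<exists>M. \<forall>b. b < M \<longrightarrow> conv2 scale c f a b = 0" for a
  proof -
    obtain Mc where Mc: "\<And>k p. c k p \<noteq> 0 \<Longrightarrow> Nc \<le> k \<Longrightarrow> k \<le> a - Nf \<Longrightarrow> Mc \<le> p"
      using assms(1) by (rule lex_trunc_uniform_lower_bound) blast
    obtain Mf where Mf: "\<And>k p. f k p \<noteq> 0 \<Longrightarrow> Nf \<le> k \<Longrightarrow> k \<le> a - Nc \<Longrightarrow> Mf \<le> p"
      using assms(2) by (rule lex_trunc_uniform_lower_bound) blast
    have "Mc + Mf \<le> b" if nonzero: "conv2 scale c f a b \<noteq> 0" for b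
    proof -
      obtain k p where nz: "c k p \<noteq> 0" "f (a - k) (b - p) \<noteq> 0"
        using nonzero by (rule conv2_nonzero_obtains)
      then have "Nc \<le> k" "Nf \<le> a - k"
        using Nc Nf by blast+
      with Mc[OF nz(1)] Mf[OF nz(2)] show ?thesis
        by simp
    qed
    then show ?thesis
      by (meson not_le)
  qed
  ultimately show ?thesis
    unfolding lex_trunc_def by (meson not_le)
qed

lemma conv2_conv2:
  assumes "lex_trunc c1" and "lex_trunc c2" and "lex_trunc f"
  shows "conv2 scale c1 (conv2 scale c2 f) a b = Sum_any (\<lambda>((k1, p1), (k2, p2)).
    scale (c1 k1 p1 * c2 k2 p2) (f (a - k1 - k2) (b - p1 - p2)))"
proof -
  define g where "g x y = scale (c1 (fst x) (snd x) * c2 (fst y) (snd y))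
    (f (a - fst x - fst y) (b - snd x - snd y))" for x y :: "int \<times> int"
  have "conv2 scale c1 (conv2 scale c2 f) a b = Sum_any (\<lambda>x. Sum_any (g x))"
    unfolding conv2_def g_def by (simp add: scale_Sum_any_right split_def diff_diff_eq)
  also have "\<dots> = Sum_any (\<lambda>(x, y). g x y)"
    by (rule Sum_any_nested, rule finite_subset[OF _ finite_conv2_conv2_support[OF assms, of a b]])
      (auto simp: g_def)
  finally show ?thesis
    by (simp add: g_def split_def)
qed

lemma conv2_commute:
  assumes "lex_trunc c1" and "lex_trunc c2" and "lex_trunc f"
  shows "conv2 scale c1 (conv2 scale c2 f) = conv2 scale c2 (conv2 scale c1 f)"
proof (intro ext)
  fix a b
  have "bij (\<lambda>(x :: int \<times> int, y :: int \<times> int). (y, x))"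
    by (auto intro!: bijI injI simp: image_def)
  then show "conv2 scale c1 (conv2 scale c2 f) a b = conv2 scale c2 (conv2 scale c1 f) a b"
    unfolding conv2_conv2[OF assms] conv2_conv2[OF assms(2,1,3)]
    by (rule Sum_any.reindex_cong) (auto simp: fun_eq_iff mult.commute diff_diff_eq add.commute)
qed

lemma conv2_diff:
  assumes "lex_trunc c" and "lex_trunc f" and "lex_trunc g"
  shows "conv2 scale c (\<lambda>a b. f a b - g a b) a b = conv2 scale c f a b - conv2 scale c g a b"
proof -
  have fin: "finite {x. scale (c (fst x) (snd x)) (F (a - fst x) (b - snd x)) \<noteq> 0}"
    if "lex_trunc F" for F
    by (rule finite_subset[OF _ finite_conv2_support[OF assms(1) that, of a b]]) auto
  show ?thesis
    unfolding conv2_def split_def scale_right_diff_distrib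
    by (rule Sum_any_diff[OF fin[OF assms(2)] fin[OF assms(3)]])
qed

lemma conv2_eq_0_imp_eq_0:
  assumes "lex_trunc c" and "c k p \<noteq> 0" and "lex_trunc h"
    and "\<And>a b. conv2 scale c h a b = 0"
  shows "h a b = 0"
proof (rule ccontr)
  assume "h a b \<noteq> 0"
  then obtain a0 b0 where h0: "h a0 b0 \<noteq> 0" and h_least: "\<And>a b. h a b \<noteq> 0 \<Longrightarrow> a0 < a \<or> a = a0 \<and> b0 \<le> b"
    using assms(3) lex_trunc_least_nonzero by metis
  obtain k0 p0 where c0: "c k0 p0 \<noteq> 0" and c_least: "\<And>k p. c k p \<noteq> 0 \<Longrightarrow> k0 < k \<or> k = k0 \<and> p0 \<le> p"
    using assms(1,2) lex_trunc_least_nonzero by metis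
  have only: "k = k0 \<and> p = p0" if "c k p \<noteq> 0" and "h (k0 + a0 - k) (p0 + b0 - p) \<noteq> 0" for k p
    using c_least[OF that(1)] h_least[OF that(2)] by auto
  have "conv2 scale c h (k0 + a0) (p0 + b0) = scale (c k0 p0) (h a0 b0)"
    unfolding conv2_def by (subst Sum_any.expand_superset[of "{(k0, p0)}"]) (auto dest: only)
  with assms(4) c0 h0 show False
    by simp
qed

lemma conv2_cancel_left:
  assumes "lex_trunc c" and "c k p \<noteq> 0" and "lex_trunc f" and "lex_trunc g"
    and "conv2 scale c f = conv2 scale c g"
  shows "f = g"
proof (intro ext)
  fix a b
  have "f a b - g a b = 0"
    using conv2_eq_0_imp_eq_0[OF assms(1,2) lex_trunc_diff[OF assms(3,4)]]
    by (simp add: conv2_diff assms)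
  then show "f a b = g a b"
    by simp
qed

end

definition zero_extend :: "(nat \<Rightarrow> int \<Rightarrow> 'a::zero) \<Rightarrow> int \<Rightarrow> int \<Rightarrow> 'a" where
  "zero_extend f a b = (if a < 0 then 0 else f (nat a) b)"

definition fps2_conv ::
  "('a \<Rightarrow> 'w \<Rightarrow> 'w) \<Rightarrow> (nat \<Rightarrow> nat \<Rightarrow> 'a) \<Rightarrow> (int \<Rightarrow> int \<Rightarrow> 'w::ab_group_add) \<Rightarrow> int \<Rightarrow> int \<Rightarrow> 'w"
where
  "fps2_conv scale c F m n = Sum_any (\<lambda>(i, j). scale (c i j) (F (m - int i) (n - int j)))"

lemma qYY_eq_fps2_conv: "qYY scale q YW u v w = fps2_conv scale q (\<lambda>m n. YW u (YW v w n) m)"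
  unfolding qYY_def fps2_conv_def by (intro ext) simp

lemma qYW_Y_eq_conv2:
  fixes scale :: "complex \<Rightarrow> 'w::ab_group_add \<Rightarrow> 'w"
  assumes "\<And>w. scale 0 w = 0"
  shows "qYW_Y scale \<phi> q Y YW u v w a b
    = conv2 scale (zero_extend (q_subst \<phi> q)) (\<lambda>a b. YW (Y u v a) w b) a b"
  unfolding qYW_Y_def conv2_def
proof (rule Sum_any_reindex_inj[of "\<lambda>(k, p). (int k, p)"])
  show "inj (\<lambda>(k::nat, p::int). (int k, p))"
    by (auto simp: inj_def)
next
  fix x :: "int \<times> int"
  assume not_range: "x \<notin> range (\<lambda>(k, p). (int k, p))"
  obtain k p where x: "x = (k, p)"
    by (cases x)
  have "k < 0"
  proof (rule ccontr)
    assume "\<not> k < 0"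
    then have "x = (\<lambda>(k, p). (int k, p)) (nat k, p)"
      using x by simp
    with not_range show False
      by blast
  qed
  then show "(\<lambda>(k, p). scale (zero_extend (q_subst \<phi> q) k p) (YW (Y u v (a - k)) w (b - p))) x = 0"
    by (simp add: x zero_extend_def assms)
qed (simp add: zero_extend_def split_def)

lemma fps2_conv_eq_conv2_transpose:
  assumes "\<And>w. scale 0 w = 0"
  shows "fps2_conv scale c F m n
    = conv2 scale (\<lambda>a b. if 0 \<le> a \<and> 0 \<le> b then c (nat b) (nat a) else 0) (\<lambda>a b. F b a) n m"
  unfolding fps2_conv_def conv2_def
proof (rule Sum_any_reindex_inj[of "\<lambda>(i, j). (int j, int i)"])
  show "inj (\<lambda>(i::nat, j::nat). (int j, int i))"
    by (auto simp: inj_def)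
next
  fix x :: "int \<times> int"
  assume not_range: "x \<notin> range (\<lambda>(i, j). (int j, int i))"
  obtain k p where x: "x = (k, p)"
    by (cases x)
  have "\<not> (0 \<le> k \<and> 0 \<le> p)"
  proof
    assume "0 \<le> k \<and> 0 \<le> p"
    then have "x = (\<lambda>(i, j). (int j, int i)) (nat p, nat k)"
      using x by simp
    with not_range show False
      by blast
  qed
  then show "(\<lambda>(k, p). scale (if 0 \<le> k \<and> 0 \<le> p then c (nat p) (nat k) else 0) (F (m - p) (n - k))) x = 0"
    by (auto simp: x assms)
qed (simp add: split_def)

lemma lex_trunc_zero_extend_q_subst:
  assumes "\<phi> $ 0 = fls_X"
  shows "lex_trunc (zero_extend (q_subst \<phi> q))"
  unfolding lex_trunc_def
proof (intro conjI allI)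
  show "\<exists>N. \<forall>a b. a < N \<longrightarrow> zero_extend (q_subst \<phi> q) a b = 0"
    by (intro exI[of _ 0]) (simp add: zero_extend_def)
next
  fix a
  obtain E where E: "\<And>k m j. phi_coeff \<phi> k m j \<noteq> 0 \<Longrightarrow> k \<le> nat a \<Longrightarrow> 0 \<le> m \<Longrightarrow> m - E \<le> j"
    using phi_coeff_lower_bound[OF assms] by blast
  have "q_subst \<phi> q (nat a) b = 0" if "b < - E" for b
  proof -
    have "phi_coeff \<phi> (nat a) (int i) (b - int j) = 0" for i j
      using E[of "nat a" "int i" "b - int j"] that by force
    then show ?thesis
      unfolding q_subst_def by (simp add: split_def)
  qed
  then show "\<exists>M. \<forall>b. b < M \<longrightarrow> zero_extend (q_subst \<phi> q) a b = 0"
    by (auto simp: zero_extend_def)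
qed

lemma (in vector_space) fps2_conv_commute:
  assumes "lex_trunc (\<lambda>n m. F m n)"
  shows "fps2_conv scale c1 (fps2_conv scale c2 F) = fps2_conv scale c2 (fps2_conv scale c1 F)"
proof -
  define C where "C c = (\<lambda>a b :: int. if 0 \<le> a \<and> 0 \<le> b then c (nat b) (nat a) else 0)"
    for c :: "nat \<Rightarrow> nat \<Rightarrow> 'a"
  have C: "lex_trunc (C c)" for c
    unfolding lex_trunc_def C_def by (intro conjI allI exI[of _ 0]) auto
  have transpose: "(\<lambda>a b. fps2_conv scale c G b a) = conv2 scale (C c) (\<lambda>a b. G b a)" for c G
    by (intro ext) (simp add: fps2_conv_eq_conv2_transpose C_def)
  have "fps2_conv scale c1 (fps2_conv scale c2 F) m n = fps2_conv scale c2 (fps2_conv scale c1 F) m n"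
    for m n
  proof -
    have "fps2_conv scale c1 (fps2_conv scale c2 F) m n
        = conv2 scale (C c1) (conv2 scale (C c2) (\<lambda>a b. F b a)) n m"
      by (simp add: fps2_conv_eq_conv2_transpose[of scale c1] transpose C_def)
    also have "\<dots> = conv2 scale (C c2) (conv2 scale (C c1) (\<lambda>a b. F b a)) n m"
      by (simp add: conv2_commute[OF C C assms])
    also have "\<dots> = fps2_conv scale c2 (fps2_conv scale c1 F) m n"
      by (simp add: fps2_conv_eq_conv2_transpose[of scale c2] transpose C_def)
    finally show ?thesis .
  qed
  then show ?thesis
    by blast
qed

lemma finite_subst_conv_support:
  assumes phi0: "\<phi> $ 0 = fls_X" and F: "lower_trunc2 F"
  shows "finite {((k1, p1), (i :: nat, j :: nat), (m, n)). 0 \<le> k1 \<and> k1 \<le> int k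
    \<and> phi_coeff \<phi> (nat k1) (int i) (p1 - int j) \<noteq> 0 \<and> phi_coeff \<phi> (k - nat k1) m (b - p1 - n) \<noteq> 0
    \<and> F m n \<noteq> 0}" (is "finite ?S")
proof -
  obtain NF where NF: "\<And>m n. F m n \<noteq> 0 \<Longrightarrow> NF \<le> m \<and> NF \<le> n"
    using F unfolding lower_trunc2_def by (meson not_le)
  obtain E0 where E0: "\<And>k' m j. phi_coeff \<phi> k' m j \<noteq> 0 \<Longrightarrow> k' \<le> k \<Longrightarrow> 0 \<le> m \<Longrightarrow> m - E0 \<le> j"
    using phi_coeff_lower_bound[OF phi0] by blast
  obtain E1 where E1: "\<And>k' m j. phi_coeff \<phi> k' m j \<noteq> 0 \<Longrightarrow> k' \<le> k \<Longrightarrow> NF \<le> m \<Longrightarrow> m - E1 \<le> j"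
    using phi_coeff_lower_bound[OF phi0] by blast
  define U where "U = b - 2 * NF + E0 + E1"
  have "?S \<subseteq> ({0..int k} \<times> {-E0..b - 2 * NF + E1}) \<times> ({..nat U} \<times> {..nat U}) \<times> ({NF..U + NF} \<times> {NF..U + NF})"
  proof (rule subsetI)
    fix x
    assume "x \<in> ?S"
    then obtain k1 p1 i j m n where x: "x = ((k1, p1), (i, j), (m, n))" and k1: "0 \<le> k1" "k1 \<le> int k"
      and nz: "phi_coeff \<phi> (nat k1) (int i) (p1 - int j) \<noteq> 0" "phi_coeff \<phi> (k - nat k1) m (b - p1 - n) \<noteq> 0"
        "F m n \<noteq> 0"
      by auto
    have mn: "NF \<le> m" "NF \<le> n"
      using NF[OF nz(3)] by auto
    have "int i - E0 \<le> p1 - int j" "m - E1 \<le> b - p1 - n"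
      using E0[OF nz(1)] E1[OF nz(2)] k1 mn by auto
    with mn k1 show "x \<in> ({0..int k} \<times> {-E0..b - 2 * NF + E1}) \<times> ({..nat U} \<times> {..nat U})
        \<times> ({NF..U + NF} \<times> {NF..U + NF})"
      unfolding x U_def by auto
  qed
  then show ?thesis
    by (rule finite_subset) simp
qed

text \<open>The summand, indexed by \<open>((k\<^sub>1, p\<^sub>1), (i, j), (m, n))\<close>, of the coefficient of
  \<open>x\<^sub>0^k x\<^sub>2^b\<close> in \<open>c(\<phi>(x\<^sub>2,x\<^sub>0),x\<^sub>2) \<cdot> F(x\<^sub>1,x\<^sub>2)|\<^bsub>x\<^sub>1=\<phi>(x\<^sub>2,x\<^sub>0)\<^esub>\<close>.\<close>

definition subst_conv_summand ::
  "(complex \<Rightarrow> 'w \<Rightarrow> 'w) \<Rightarrow> complex fls fps \<Rightarrow> (nat \<Rightarrow> nat \<Rightarrow> complex) \<Rightarrow> (int \<Rightarrow> int \<Rightarrow> 'w::zero)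
    \<Rightarrow> nat \<Rightarrow> int \<Rightarrow> int \<times> int \<Rightarrow> nat \<times> nat \<Rightarrow> int \<times> int \<Rightarrow> 'w"
where
  "subst_conv_summand scale \<phi> c F k b = (\<lambda>(k1, p1) (i, j) (m, n).
    if 0 \<le> k1 \<and> k1 \<le> int k
    then scale (c i j * phi_coeff \<phi> (nat k1) (int i) (p1 - int j) * phi_coeff \<phi> (k - nat k1) m (b - p1 - n))
      (F m n)
    else 0)"

locale complex_vector_space = vector_space scale for scale :: "complex \<Rightarrow> 'w::ab_group_add \<Rightarrow> 'w"
begin

lemma lex_trunc_zero_extend_subst_phi:
  assumes phi0: "\<phi> $ 0 = fls_X" and F: "lower_trunc2 F"
  shows "lex_trunc (zero_extend (subst_phi scale \<phi> F))"
  unfolding lex_trunc_def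
proof (intro conjI allI)
  show "\<exists>N. \<forall>a b. a < N \<longrightarrow> zero_extend (subst_phi scale \<phi> F) a b = 0"
    by (intro exI[of _ 0]) (simp add: zero_extend_def)
next
  fix a
  obtain NF where NF: "\<And>m n. F m n \<noteq> 0 \<Longrightarrow> NF \<le> m \<and> NF \<le> n"
    using F unfolding lower_trunc2_def by (meson not_le)
  obtain E where E: "\<And>k m j. phi_coeff \<phi> k m j \<noteq> 0 \<Longrightarrow> k \<le> nat a \<Longrightarrow> NF \<le> m \<Longrightarrow> m - E \<le> j"
    using phi_coeff_lower_bound[OF phi0] by blast
  have "subst_phi scale \<phi> F (nat a) b = 0" if "b < 2 * NF - E" for b
  proof -
    have "scale (phi_coeff \<phi> (nat a) m (b - n)) (F m n) = 0" for m n
    proof (cases "F m n = 0")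
      case False
      with NF E[of "nat a" m "b - n"] that show ?thesis
        by fastforce
    qed simp
    then have "(\<lambda>(m, n). scale (phi_coeff \<phi> (nat a) m (b - n)) (F m n)) = (\<lambda>_. 0)"
      by auto
    then show ?thesis
      unfolding subst_phi_def by simp
  qed
  then show "\<exists>M. \<forall>b. b < M \<longrightarrow> zero_extend (subst_phi scale \<phi> F) a b = 0"
    by (auto simp: zero_extend_def)
qed

lemma finite_subst_conv_summand_support:
  assumes "\<phi> $ 0 = fls_X" and "lower_trunc2 F"
  shows "finite {(x, y, z). subst_conv_summand scale \<phi> c F k b x y z \<noteq> 0}"
  by (rule finite_subset[OF _ finite_subst_conv_support[OF assms, of k b]])
    (auto simp: subst_conv_summand_def split: if_splits)

lemma conv2_q_subst_subst_phi_eq_Sum_any: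
  assumes "\<phi> $ 0 = fls_X" and "lower_trunc2 F"
  shows "conv2 scale (zero_extend (q_subst \<phi> c)) (zero_extend (subst_phi scale \<phi> F)) (int k) b
    = Sum_any (\<lambda>(x, y, z). subst_conv_summand scale \<phi> c F k b x y z)"
proof -
  have "scale (zero_extend (q_subst \<phi> c) k1 p1) (zero_extend (subst_phi scale \<phi> F) (int k - k1) (b - p1))
      = Sum_any (\<lambda>y. Sum_any (subst_conv_summand scale \<phi> c F k b (k1, p1) y))" for k1 p1
  proof (cases "0 \<le> k1 \<and> k1 \<le> int k")
    case True
    have "nat (int k - k1) = k - nat k1"
      using True by (simp add: nat_diff_distrib)
    then have q: "zero_extend (q_subst \<phi> c) k1 p1
        = Sum_any (\<lambda>(i, j). c i j * phi_coeff \<phi> (nat k1) (int i) (p1 - int j))"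
      and S: "zero_extend (subst_phi scale \<phi> F) (int k - k1) (b - p1)
        = Sum_any (\<lambda>(m, n). scale (phi_coeff \<phi> (k - nat k1) m (b - p1 - n)) (F m n))"
      using True by (simp_all add: zero_extend_def q_subst_def subst_phi_def diff_diff_eq)
    show ?thesis
      unfolding q S scale_Sum_any_left unfolding scale_Sum_any_right
      by (simp add: subst_conv_summand_def split_def True mult.assoc)
  qed (auto simp: zero_extend_def subst_conv_summand_def)
  then have "conv2 scale (zero_extend (q_subst \<phi> c)) (zero_extend (subst_phi scale \<phi> F)) (int k) b
      = Sum_any (\<lambda>x. Sum_any (\<lambda>y. Sum_any (subst_conv_summand scale \<phi> c F k b x y)))"
    unfolding conv2_def by (simp add: split_def)
  also have "\<dots> = Sum_any (\<lambda>(x, y, z). subst_conv_summand scale \<phi> c F k b x y z)"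
    by (rule Sum_any_nested3[OF finite_subst_conv_summand_support[OF assms]])
  finally show ?thesis .
qed

lemma subst_phi_fps2_conv_eq_Sum_any:
  assumes phi0: "\<phi> $ 0 = fls_X" and F: "lower_trunc2 F"
  shows "subst_phi scale \<phi> (fps2_conv scale c F) k b
    = Sum_any (\<lambda>(x, y, z). subst_conv_summand scale \<phi> c F k b x y z)"
proof -
  have ne: "\<phi> $ 0 \<noteq> 0"
    using phi0 by simp
  define T where "T = (\<lambda>(m :: int, n :: int) (i :: nat, j :: nat) (k1 :: int, s :: int).
    scale ((if 0 \<le> k1 \<and> k1 \<le> int k
      then phi_coeff \<phi> (nat k1) (int i) s * phi_coeff \<phi> (k - nat k1) (m - int i) (b - n - s) else 0) * c i j)
    (F (m - int i) (n - int j)))"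
  define r where "r = (\<lambda>((m :: int, n :: int), (i :: nat, j :: nat), (k1 :: int, s :: int)).
    ((k1, s + int j), (i, j), (m - int i, n - int j)))"
  define r' where "r' = (\<lambda>((k1 :: int, p1 :: int), (i :: nat, j :: nat), (m :: int, n :: int)).
    ((m + int i, n + int j), (i, j), (k1, p1 - int j)))"
  have arith: "b - (s + int j) - (n - int j) = b - n - s" for s n :: int and j :: nat
    by simp
  have bij: "bij r"
    by (rule o_bij[of r']) (auto simp: r_def r'_def fun_eq_iff)
  have summand_r: "(\<lambda>(x, y, z). subst_conv_summand scale \<phi> c F k b x y z) \<circ> r = (\<lambda>(u, v, w). T u v w)"
    by (auto simp: fun_eq_iff r_def T_def subst_conv_summand_def algebra_simps)
  have fin: "finite {(u, v, w). T u v w \<noteq> 0}"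
    by (rule finite_subset[OF _ finite_vimageI[OF finite_subst_conv_summand_support[OF phi0 F,
          where c = c and k = k and b = b] bij_is_inj[OF bij]]])
      (auto simp: r_def T_def subst_conv_summand_def arith split: if_splits)
  have T: "scale (phi_coeff \<phi> k m (b - n)) (scale (c i j) (F (m - int i) (n - int j))) = Sum_any (T (m, n) (i, j))"
    for m n i j
    unfolding phi_coeff_add[OF ne, of k m "b - n" i] scale_Sum_any_left
    by (intro Sum_any.cong) (auto simp: T_def)
  have "subst_phi scale \<phi> (fps2_conv scale c F) k b = Sum_any (\<lambda>u. Sum_any (\<lambda>v. Sum_any (T u v)))"
    unfolding subst_phi_def fps2_conv_def scale_Sum_any_right
    by (auto intro!: Sum_any.cong simp: T simp del: scale_scale split: prod.split)
  also have "\<dots> = Sum_any (\<lambda>(u, v, w). T u v w)"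
    by (rule Sum_any_nested3[OF fin])
  also have "\<dots> = Sum_any (\<lambda>(x, y, z). subst_conv_summand scale \<phi> c F k b x y z)"
    by (rule Sum_any.reindex_cong[OF bij summand_r, symmetric])
  finally show ?thesis .
qed

lemma zero_extend_subst_phi_fps2_conv:
  assumes "\<phi> $ 0 = fls_X" and "lower_trunc2 F"
  shows "zero_extend (subst_phi scale \<phi> (fps2_conv scale c F))
    = conv2 scale (zero_extend (q_subst \<phi> c)) (zero_extend (subst_phi scale \<phi> F))"
proof (intro ext)
  fix a b
  show "zero_extend (subst_phi scale \<phi> (fps2_conv scale c F)) a b
    = conv2 scale (zero_extend (q_subst \<phi> c)) (zero_extend (subst_phi scale \<phi> F)) a b"
  proof (cases "a < 0")
    case True
    have "conv2 scale (zero_extend (q_subst \<phi> c)) (zero_extend (subst_phi scale \<phi> F)) a b = 0"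
    proof (rule ccontr)
      assume "conv2 scale (zero_extend (q_subst \<phi> c)) (zero_extend (subst_phi scale \<phi> F)) a b \<noteq> 0"
      then show False
        by (rule conv2_nonzero_obtains) (use True in \<open>auto simp: zero_extend_def split: if_splits\<close>)
    qed
    with True show ?thesis
      by (simp add: zero_extend_def)
  next
    case False
    then obtain k where "a = int k"
      using nonneg_int_cases by (metis not_less)
    then show ?thesis
      by (simp add: zero_extend_def subst_phi_fps2_conv_eq_Sum_any[OF assms]
          conv2_q_subst_subst_phi_eq_Sum_any[OF assms])
  qed
qed

lemma q_subst_identity_transfer:
  assumes phi0: "\<phi> $ 0 = fls_X"
    and F: "lex_trunc (\<lambda>n m. F m n)" and G: "lex_trunc G"
    and p_nonzero: "q_subst \<phi> p k j \<noteq> 0"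
    and pF: "lower_trunc2 (fps2_conv scale p F)" and qF: "lower_trunc2 (fps2_conv scale q F)"
    and p_identity: "conv2 scale (zero_extend (q_subst \<phi> p)) G
      = zero_extend (subst_phi scale \<phi> (fps2_conv scale p F))"
  shows "conv2 scale (zero_extend (q_subst \<phi> q)) G = zero_extend (subst_phi scale \<phi> (fps2_conv scale q F))"
proof -
  let ?P = "zero_extend (q_subst \<phi> p)" and ?Q = "zero_extend (q_subst \<phi> q)"
  have P: "lex_trunc ?P" and Q: "lex_trunc ?Q"
    using phi0 by (simp_all add: lex_trunc_zero_extend_q_subst)
  have "conv2 scale ?P (conv2 scale ?Q G) = conv2 scale ?Q (conv2 scale ?P G)"
    by (rule conv2_commute[OF P Q G])
  also have "\<dots> = zero_extend (subst_phi scale \<phi> (fps2_conv scale q (fps2_conv scale p F)))"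
    by (simp add: p_identity zero_extend_subst_phi_fps2_conv[OF phi0 pF])
  also have "\<dots> = zero_extend (subst_phi scale \<phi> (fps2_conv scale p (fps2_conv scale q F)))"
    by (simp add: fps2_conv_commute[OF F])
  also have "\<dots> = conv2 scale ?P (zero_extend (subst_phi scale \<phi> (fps2_conv scale q F)))"
    by (rule zero_extend_subst_phi_fps2_conv[OF phi0 qF])
  finally show ?thesis
    using p_nonzero
    by (intro conv2_cancel_left[OF P _ lex_trunc_conv2[OF Q G] lex_trunc_zero_extend_subst_phi[OF phi0 qF],
          of "int k" j]) (simp_all add: zero_extend_def)
qed

end

lemma lex_trunc_comp_lower_trunc:
  assumes "lower_trunc f" and "\<And>x. lower_trunc (g x)" and "\<And>b. g 0 b = 0"
  shows "lex_trunc (\<lambda>a b. g (f a) b)"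
  using assms unfolding lex_trunc_def lower_trunc_def by (metis (full_types))

lemma phi_quasi_module_YW_zero:
  assumes "phi_quasi_module \<phi> Y one scV scW YW"
  shows "YW x 0 n = 0" and "YW 0 w n = 0"
proof -
  have "module_hom scW scW (\<lambda>w. YW x w n)" and "module_hom scV scW (\<lambda>x. YW x w n)"
    using assms unfolding phi_quasi_module_def module_hom_iff_linear by blast+
  then show "YW x 0 n = 0" and "YW 0 w n = 0"
    by (auto dest: module_hom.zero)
qed

lemma lex_trunc_YW_YW:
  assumes "phi_quasi_module \<phi> Y one scV scW YW"
  shows "lex_trunc (\<lambda>n m. YW u (YW v w n) m)"
  using assms lex_trunc_comp_lower_trunc[of "YW v w" "YW u"] phi_quasi_module_YW_zero[OF assms]
  by (simp add: phi_quasi_module_def)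

lemma lex_trunc_YW_Y:
  assumes "nonlocal_va scV Y one" and "phi_quasi_module \<phi> Y one scV scW YW"
  shows "lex_trunc (\<lambda>a b. YW (Y u v a) w b)"
  using assms lex_trunc_comp_lower_trunc[of "Y u v" "\<lambda>x. YW x w"] phi_quasi_module_YW_zero[OF assms(2)]
  by (simp add: nonlocal_va_def phi_quasi_module_def)

lemma assoc_identity_iff_conv2:
  assumes "vector_space scale"
  shows "assoc_identity scale \<phi> q Y YW u v \<longleftrightarrow> (\<forall>w. conv2 scale (zero_extend (q_subst \<phi> q))
    (\<lambda>a b. YW (Y u v a) w b) = zero_extend (subst_phi scale \<phi> (qYY scale q YW u v w)))"
  unfolding assoc_identity_def
  by (auto simp: fun_eq_iff qYW_Y_eq_conv2 zero_extend_def module.scale_zero_left[OF assms[folded module_iff_vector_space]])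

theorem lemma3p6:
  fixes \<phi> :: "complex fls fps"
    and scV :: "complex \<Rightarrow> 'v::ab_group_add \<Rightarrow> 'v"
    and Y :: "'v \<Rightarrow> 'v \<Rightarrow> int \<Rightarrow> 'v"
    and one :: 'v
    and scW :: "complex \<Rightarrow> 'w::ab_group_add \<Rightarrow> 'w"
    and YW :: "'v \<Rightarrow> 'w \<Rightarrow> int \<Rightarrow> 'w"
    and u v :: 'v
    and q :: "nat \<Rightarrow> nat \<Rightarrow> complex"
  assumes "is_associate \<phi>"
    and "nonlocal_va scV Y one"
    and "phi_quasi_module \<phi> Y one scV scW YW"
    and "\<forall>w. lower_trunc2 (qYY scW q YW u v w)"
  shows "assoc_identity scW \<phi> q Y YW u v"
proof -
  have phi0: "\<phi> $ 0 = fls_X"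
    using assms(1) unfolding is_associate_def by blast
  have W: "vector_space scW"
    using assms(3) by (simp add: phi_quasi_module_def)
  then interpret W: complex_vector_space scW
    by (simp add: complex_vector_space_def)
  obtain p k j where p_nonzero: "q_subst \<phi> p k j \<noteq> 0" and pL: "\<forall>w. lower_trunc2 (qYY scW p YW u v w)"
    and p_identity: "assoc_identity scW \<phi> p Y YW u v"
    using assms(3) unfolding phi_quasi_module_def by blast
  show ?thesis
    unfolding assoc_identity_iff_conv2[OF W] qYY_eq_fps2_conv
  proof
    fix w
    show "conv2 scW (zero_extend (q_subst \<phi> q)) (\<lambda>a b. YW (Y u v a) w b)
      = zero_extend (subst_phi scW \<phi> (fps2_conv scW q (\<lambda>m n. YW u (YW v w n) m)))"
      by (rule W.q_subst_identity_transfer[OF phi0 lex_trunc_YW_YW[OF assms(3)]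
            lex_trunc_YW_Y[OF assms(2,3)] p_nonzero])
        (use pL assms(4) p_identity in \<open>simp_all add: qYY_eq_fps2_conv assoc_identity_iff_conv2[OF W]\<close>)
  qed
qed

end
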